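(* Let $X$ be a bounded random vector in $\mathbb R^N$ with $\mathbb E(X)=0$ and $Y$ a bounded real random variable, $m=\mathrm{Law}(X)$, with conditional cdf $F(x,y)=\mathbb P(Y\le y\mid X=x)$ and conditional quantile $Q(x,t)=\inf\{\alpha:F(x,\alpha)>t\}$, and assume that for $m$-a.e. $x$, $t\mapsto Q(x,t)$ is continuous and increasing, and that $\mathbb P(Y=\alpha+\beta\cdot X)=0$ for all $(\alpha,\beta)\in\mathbb R^{1+N}$. Let $\alpha\in C([0,1],\mathbb R)$, $\beta\in C([0,1],\mathbb R^N)$ be such that for $m$-a.e. $x$, $t\mapsto\alpha(t)+\beta(t)\cdot x$ is increasing on $[0,1]$. Then $Q(x,t)=\alpha(t)+x\cdot\beta(t)$ for $m$-a.e. $x$ and every $t\in[0,1]$ if and only if there exists a random variable $U$ such that $Y=\alpha(U)+X\cdot\beta(U)$ a.s., $U$ is uniformly distributed on $[0,1]$, and $U$ is independent of $X$.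
   Context: The underlying probability space is nonatomic. *)

theory Defs
  imports "HOL-Probability.Probability"
begin

definition nonatomic :: "'a measure \<Rightarrow> bool" where
  "nonatomic M \<longleftrightarrow> (\<forall>A\<in>sets M. 0 < measure M A \<longrightarrow>
      (\<exists>B\<in>sets M. B \<subseteq> A \<and> 0 < measure M B \<and> measure M B < measure M A))"

definition is_cond_cdf ::
  "'a measure \<Rightarrow> ('a \<Rightarrow> 'b::euclidean_space) \<Rightarrow> ('a \<Rightarrow> real) \<Rightarrow> ('b \<Rightarrow> real \<Rightarrow> real) \<Rightarrow> bool" where
  "is_cond_cdf M X Y F \<longleftrightarrow>
     (\<forall>x. mono (F x) \<and> (\<forall>y. continuous (at_right y) (F x)) \<and>
          (F x \<longlongrightarrow> 0) at_bot \<and> (F x \<longlongrightarrow> 1) at_top) \<and>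
     (\<forall>y. (\<lambda>x. F x y) \<in> borel_measurable borel) \<and>
     (\<forall>A\<in>sets borel. \<forall>y.
        measure M {\<omega>\<in>space M. X \<omega> \<in> A \<and> Y \<omega> \<le> y} =
        (LINT x:A|distr M borel X. F x y))"

text \<open>Conditional quantile Q(x,t) = inf {a. F(x,a) > t} for t < 1; at t = 1 we use the
  finite (left-continuous) extension inf {a. F(x,a) \<ge> 1}.\<close>
definition cond_quantile :: "('b \<Rightarrow> real \<Rightarrow> real) \<Rightarrow> 'b \<Rightarrow> real \<Rightarrow> real" where
  "cond_quantile F x t =
     (if t < 1 then Inf {a. F x a > t} else Inf {a. F x a \<ge> 1})"

definition indep_rv :: "'a measure \<Rightarrow> ('a \<Rightarrow> 'c::topological_space) \<Rightarrow> ('a \<Rightarrow> 'd::topological_space) \<Rightarrow> bool" where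
  "indep_rv M U V \<longleftrightarrow> (\<forall>A\<in>sets borel. \<forall>B\<in>sets borel.
      measure M {\<omega>\<in>space M. U \<omega> \<in> A \<and> V \<omega> \<in> B} =
      measure M {\<omega>\<in>space M. U \<omega> \<in> A} * measure M {\<omega>\<in>space M. V \<omega> \<in> B})"

end

theory Submission
  imports Defs
begin

text \<open>Write m for the law of X and g x t = \<alpha> t + x \<bullet> \<beta> t. The central identity is
  P(X \<in> A, Y \<le> h X) = \<integral>_A F(x, h x) dm(x) for Borel h, obtained for countably-valued h
  by summation and in general by dyadic approximation from above and right continuity of F.

  If Q = g, take U = F(X, Y). Since Q(x, \<cdot>) is a continuous increasing inverse of F(x, \<cdot>),
  Y = Q(X, U) almost surely, and P(U \<le> s, X \<in> A) = P(X \<in> A, Y \<le> g(X, s)) =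
  \<integral>_A F(x, g(x, s)) dm = s m(A); this joint cdf identifies U as uniform and independent of X.
  Conversely, if Y = g(X, U) with such a U, the same chain read backwards gives
  F(x, g(x, s)) = s for m-almost every x, simultaneously for all rational s and hence, by
  monotonicity, for all s \<in> [0, 1]; so g(x, \<cdot>) is a continuous right inverse of F(x, \<cdot>),
  which forces it to be Q(x, \<cdot>).\<close>

section \<open>Distribution functions and quantiles\<close>

definition distribution_function :: "(real \<Rightarrow> real) \<Rightarrow> bool" where
  "distribution_function f \<longleftrightarrow>
     mono f \<and> (\<forall>y. continuous (at_right y) f) \<and> (f \<longlongrightarrow> 0) at_bot \<and> (f \<longlongrightarrow> 1) at_top"

context
  fixes f :: "real \<Rightarrow> real"
  assumes f: "distribution_function f"
begin

lemma distribution_function_mono: "a \<le> b \<Longrightarrow> f a \<le> f b"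
  using f by (auto simp: distribution_function_def mono_def)

lemma distribution_function_nonneg: "0 \<le> f y"
proof (rule tendsto_upperbound)
  show "(f \<longlongrightarrow> 0) at_bot" using f by (simp add: distribution_function_def)
  show "\<forall>\<^sub>F z in at_bot. f z \<le> f y"
    by (rule eventually_at_bot_linorderI[of y]) (rule distribution_function_mono)
qed simp

lemma distribution_function_le_one: "f y \<le> 1"
proof (rule tendsto_lowerbound)
  show "(f \<longlongrightarrow> 1) at_top" using f by (simp add: distribution_function_def)
  show "\<forall>\<^sub>F z in at_top. f y \<le> f z"
    by (rule eventually_at_top_linorderI[of y]) (rule distribution_function_mono)
qed simp

lemma distribution_function_at_right: "(f \<longlongrightarrow> f y) (at_right y)"
  using f by (simp add: distribution_function_def continuous_within)

lemma distribution_function_right_step: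
  assumes "f y < c" shows "\<exists>d>0. f (y + d) < c"
proof -
  obtain b where "b > y" and b: "\<And>z. y < z \<Longrightarrow> z < b \<Longrightarrow> f z < c"
    using order_tendstoD(2)[OF distribution_function_at_right assms]
    by (auto simp: eventually_at_right_field)
  then show ?thesis by (intro exI[of _ "(b - y) / 2"] conjI b) (auto simp: field_simps)
qed

lemma bdd_below_distribution_function_gt:
  assumes "0 < t" shows "bdd_below {a. t < f a}"
proof -
  obtain b where b: "\<And>z. z \<le> b \<Longrightarrow> f z < t"
    using order_tendstoD(2)[of f 0 at_bot t] f assms
    by (auto simp: distribution_function_def eventually_at_bot_linorder)
  have "b \<le> a" if "t < f a" for a
    using b[of a] that by force
  thus ?thesis unfolding bdd_below_def by blast
qed

lemma distribution_function_gt_nonempty: "t < 1 \<Longrightarrow> {a. t < f a} \<noteq> {}"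
  using order_tendstoD(1)[of f 1 at_top t] f
  by (auto simp: distribution_function_def eventually_at_top_linorder)

end

lemma mono_on_eq_id_of_rationals:
  fixes \<phi> :: "real \<Rightarrow> real"
  assumes mono: "mono_on {0..1} \<phi>" and rat: "\<And>r. r \<in> \<rat> \<Longrightarrow> r \<in> {0..1} \<Longrightarrow> \<phi> r = r"
    and s: "s \<in> {0..1}"
  shows "\<phi> s = s"
proof (rule ccontr)
  assume "\<phi> s \<noteq> s"
  moreover have "\<phi> 0 = 0" "\<phi> 1 = 1" using rat by auto
  ultimately consider "s < \<phi> s" "s < 1" | "\<phi> s < s" "0 < s"
    using s by (cases "s < \<phi> s") force+
  then show False
  proof cases
    case 1
    then obtain r where "r \<in> \<rat>" "s < r" "r < min (\<phi> s) 1"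
      using Rats_dense_in_real[of s "min (\<phi> s) 1"] by auto
    with mono_onD[OF mono, of s r] rat[of r] s show False by auto
  next
    case 2
    then obtain r where "r \<in> \<rat>" "max (\<phi> s) 0 < r" "r < s"
      using Rats_dense_in_real[of "max (\<phi> s) 0" s] by auto
    with mono_onD[OF mono, of r s] rat[of r] s show False by auto
  qed
qed

context
  fixes F :: "'b \<Rightarrow> real \<Rightarrow> real" and x :: 'b
  assumes F: "distribution_function (F x)"
begin

lemma le_cdf_cond_quantile:
  assumes "0 < t" "t < 1"
  shows "t \<le> F x (cond_quantile F x t)"
proof (rule ccontr)
  let ?S = "{a. t < F x a}"
  let ?q = "cond_quantile F x t"
  assume "\<not> t \<le> F x ?q"
  then obtain d where d: "d > 0" "F x (?q + d) < t"
    using distribution_function_right_step[OF F] by (meson not_le)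
  have "Inf ?S < ?q + d"
    using assms d by (simp add: cond_quantile_def)
  then obtain a where "t < F x a" "a < ?q + d"
    by (auto simp: cInf_less_iff[OF distribution_function_gt_nonempty[OF F assms(2)]
          bdd_below_distribution_function_gt[OF F assms(1)]])
  with d show False
    using distribution_function_mono[OF F, of a "?q + d"] by simp
qed

lemma cdf_cond_quantile_le:
  assumes Q: "strict_mono_on {0..1} (cond_quantile F x)" and t: "0 \<le> t" "t < 1"
  shows "F x (cond_quantile F x t) \<le> t"
proof (rule ccontr)
  let ?q = "cond_quantile F x t"
  assume "\<not> F x ?q \<le> t"
  \<comment> \<open>a level t' \<in> (t, F x ?q) gives Q t' \<le> Q t, contradicting strict monotonicity\<close>
  define t' where "t' = (t + min (F x ?q) 1) / 2"
  have t': "t < t'" "t' < 1" "t' < F x ?q" "0 < t'"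
    using \<open>\<not> F x ?q \<le> t\<close> t unfolding t'_def by auto
  have "cond_quantile F x t' = Inf {a. t' < F x a}"
    using t' by (simp add: cond_quantile_def)
  also have "\<dots> \<le> ?q"
    using t' bdd_below_distribution_function_gt[OF F, of t'] by (intro cInf_lower) auto
  finally show False
    using strict_mono_onD[OF Q, of t t'] t t' by auto
qed

lemma cdf_cond_quantile:
  assumes Q: "strict_mono_on {0..1} (cond_quantile F x)" and t: "t \<in> {0..1}"
  shows "F x (cond_quantile F x t) = t"
proof (cases "t < 1")
  case True
  then show ?thesis
    using le_cdf_cond_quantile[of t] cdf_cond_quantile_le[OF Q, of t]
      distribution_function_nonneg[OF F, of "cond_quantile F x t"] t
    by (cases "t = 0") auto
next
  case False
  have "s \<le> F x (cond_quantile F x 1)" if "0 < s" "s < 1" for s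
  proof -
    have "cond_quantile F x s \<le> cond_quantile F x 1"
      using that by (intro strict_mono_on_leD[OF Q]) auto
    then show ?thesis
      using le_cdf_cond_quantile[OF that] distribution_function_mono[OF F] order_trans by blast
  qed
  then have "1 \<le> F x (cond_quantile F x 1)"
    by (intro dense_le_bounded[OF zero_less_one])
  with False t show ?thesis
    using distribution_function_le_one[OF F] by (simp add: order_antisym)
qed

lemma cond_quantile_cdf:
  assumes Q: "continuous_on {0..1} (cond_quantile F x)" "strict_mono_on {0..1} (cond_quantile F x)"
    and y: "cond_quantile F x 0 \<le> y" "y \<le> cond_quantile F x 1"
  shows "cond_quantile F x (F x y) = y"
proof -
  obtain t where t: "t \<in> {0..1}" and y_eq: "y = cond_quantile F x t"
    using IVT'[of "cond_quantile F x" 0 y 1] Q(1) y by auto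
  then show ?thesis
    using cdf_cond_quantile[OF Q(2) t] by simp
qed

context
  fixes g :: "real \<Rightarrow> real"
  assumes g: "continuous_on {0..1} g" and Fg: "\<And>s. s \<in> {0..1} \<Longrightarrow> F x (g s) = s"
begin

lemma cdf_le_of_less_right_inverse: "a < g s \<Longrightarrow> s \<in> {0..1} \<Longrightarrow> F x a \<le> s"
  using distribution_function_mono[OF F, of a "g s"] Fg[of s] by simp

lemma Inf_cdf_gt_eq_right_inverse:
  assumes t: "0 \<le> t" "t < 1"
  shows "Inf {a. t < F x a} = g t"
proof (rule cInf_eq_non_empty)
  show "{a. t < F x a} \<noteq> {}" using distribution_function_gt_nonempty[OF F t(2)] .
next
  fix a assume "a \<in> {a. t < F x a}"
  then show "g t \<le> a"
    using cdf_le_of_less_right_inverse[of a t] t by force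
next
  fix b assume b: "\<And>a. a \<in> {a. t < F x a} \<Longrightarrow> b \<le> a"
  \<comment> \<open>g s lies in the set for all s \<in> (t, 1], and g s \<rightarrow> g t as s \<rightarrow> t from the right\<close>
  show "b \<le> g t"
  proof (rule tendsto_lowerbound)
    show "(g \<longlongrightarrow> g t) (at_right t)"
      using t by (intro continuous_on_Icc_at_rightD continuous_on_subset[OF g]) auto
    show "\<forall>\<^sub>F s in at_right t. b \<le> g s"
      unfolding eventually_at_right_field
      using t Fg by (intro exI[of _ 1]) (auto intro!: b)
  qed simp
qed

lemma Inf_cdf_ge_one_eq_right_inverse: "Inf {a. 1 \<le> F x a} = g 1"
proof (rule cInf_eq_minimum)
  show "g 1 \<in> {a. 1 \<le> F x a}" using Fg[of 1] by simp
next
  fix a assume a: "a \<in> {a. 1 \<le> F x a}"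
  show "g 1 \<le> a"
  proof (rule tendsto_upperbound)
    show "(g \<longlongrightarrow> g 1) (at_left 1)"
      using g by (intro continuous_on_Icc_at_leftD) auto
    have "g s \<le> a" if "0 < s" "s < 1" for s
      using cdf_le_of_less_right_inverse[of a s] a that by force
    then show "\<forall>\<^sub>F s in at_left 1. g s \<le> a"
      unfolding eventually_at_left_field by (intro exI[of _ 0]) auto
  qed simp
qed

lemma cond_quantile_eq_right_inverse: "t \<in> {0..1} \<Longrightarrow> cond_quantile F x t = g t"
  by (cases "t < 1")
    (simp_all add: cond_quantile_def Inf_cdf_gt_eq_right_inverse Inf_cdf_ge_one_eq_right_inverse)

end

lemma cond_quantile_eq_of_rational_levels:
  assumes g: "continuous_on {0..1} g" "strict_mono_on {0..1} g"
    and rat: "\<And>r. r \<in> \<rat> \<Longrightarrow> r \<in> {0..1} \<Longrightarrow> F x (g r) = r" and t: "t \<in> {0..1}"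
  shows "cond_quantile F x t = g t"
proof (rule cond_quantile_eq_right_inverse[OF g(1) _ t])
  fix s :: real assume s: "s \<in> {0..1}"
  show "F x (g s) = s"
  proof (rule mono_on_eq_id_of_rationals[where \<phi> = "\<lambda>s. F x (g s)", OF _ rat s])
    show "mono_on {0..1} (\<lambda>s. F x (g s))"
      by (intro mono_onI distribution_function_mono[OF F] strict_mono_on_leD[OF g(2)])
  qed
qed

end

section \<open>Conditional distribution functions\<close>

lemma distribution_function_tendsto_from_above:
  assumes f: "distribution_function f" and s: "\<And>n. y \<le> s n" "s \<longlonglongrightarrow> y"
  shows "(\<lambda>n. f (s n)) \<longlonglongrightarrow> f y"
proof -
  have "continuous (at y within {y..}) f"
    using f by (simp add: distribution_function_def at_within_Ici_at_right)
  then show ?thesis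
    using continuous_within_tendsto_compose'[of y "{y..}" f s] s by simp
qed

text \<open>F x y < s iff F x q < s for some rational q > y, by right continuity.\<close>
lemma borel_measurable_distribution_function_uncurry:
  fixes F :: "'b::second_countable_topology \<Rightarrow> real \<Rightarrow> real"
  assumes F: "\<And>x. distribution_function (F x)" and [measurable]: "\<And>y. (\<lambda>x. F x y) \<in> borel_measurable borel"
  shows "case_prod F \<in> borel_measurable borel"
proof -
  let ?P = "borel \<Otimes>\<^sub>M (borel :: real measure)"
  have "case_prod F \<in> borel_measurable ?P"
  proof (subst borel_measurable_iff_less, intro allI)
    fix s
    have eq: "{p \<in> space ?P. case_prod F p < s} = (\<Union>q\<in>\<rat>. {p \<in> space ?P. snd p < q \<and> F (fst p) q < s})"
    proof (intro equalityI subsetI)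
      fix p assume "p \<in> {p \<in> space ?P. case_prod F p < s}"
      then obtain x y where p: "p = (x, y)" "F x y < s" by (cases p) auto
      then obtain d where d: "d > 0" "F x (y + d) < s"
        using distribution_function_right_step[OF F] by blast
      obtain q where q: "q \<in> \<rat>" "y < q" "q < y + d"
        using Rats_dense_in_real[of y "y + d"] d by auto
      with d have "F x q < s"
        using distribution_function_mono[OF F, of q "y + d" x] by simp
      with p q show "p \<in> (\<Union>q\<in>\<rat>. {p \<in> space ?P. snd p < q \<and> F (fst p) q < s})"
        by (auto simp: space_pair_measure)
    next
      fix p assume "p \<in> (\<Union>q\<in>\<rat>. {p \<in> space ?P. snd p < q \<and> F (fst p) q < s})"
      then obtain q where "snd p < q" "F (fst p) q < s" by auto
      then show "p \<in> {p \<in> space ?P. case_prod F p < s}"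
        using distribution_function_mono[OF F, of "snd p" q "fst p"]
        by (auto simp: case_prod_beta space_pair_measure)
    qed
    have "(\<Union>q\<in>\<rat>. {p \<in> space ?P. snd p < q \<and> F (fst p) q < s}) \<in> sets ?P"
      by (intro sets.countable_UN'' countable_rat) measurable
    with eq show "{p \<in> space ?P. case_prod F p < s} \<in> sets ?P" by simp
  qed
  then show ?thesis by (simp add: borel_prod)
qed

definition dyadic_ceiling :: "nat \<Rightarrow> real \<Rightarrow> real" where
  "dyadic_ceiling n z = real_of_int \<lceil>z * 2 ^ n\<rceil> / 2 ^ n"

lemma measurable_dyadic_ceiling [measurable]: "dyadic_ceiling n \<in> borel_measurable borel"
  unfolding dyadic_ceiling_def by measurable

lemma dyadic_ceiling_in_range: "dyadic_ceiling n z \<in> range (\<lambda>k::int. real_of_int k / 2 ^ n)"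
  unfolding dyadic_ceiling_def by (rule rangeI)

lemma le_dyadic_ceiling: "z \<le> dyadic_ceiling n z"
  using le_of_int_ceiling[of "z * 2 ^ n"] by (simp add: dyadic_ceiling_def field_simps)

lemma dyadic_ceiling_le: "dyadic_ceiling n z \<le> z + 1 / 2 ^ n"
  using ceiling_correct[of "z * 2 ^ n"] by (simp add: dyadic_ceiling_def field_simps)

lemma dyadic_ceiling_Suc_le: "dyadic_ceiling (Suc n) z \<le> dyadic_ceiling n z"
proof -
  have "\<lceil>z * 2 ^ Suc n\<rceil> \<le> 2 * \<lceil>z * 2 ^ n\<rceil>"
    using le_of_int_ceiling[of "z * 2 ^ n"] by (intro ceiling_le) simp
  then have "real_of_int \<lceil>z * 2 ^ Suc n\<rceil> \<le> 2 * real_of_int \<lceil>z * 2 ^ n\<rceil>" by linarith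
  then show ?thesis by (simp add: dyadic_ceiling_def field_simps)
qed

lemma dyadic_ceiling_tendsto: "(\<lambda>n. dyadic_ceiling n z) \<longlonglongrightarrow> z"
proof (rule tendsto_sandwich[of "\<lambda>_. z" _ _ "\<lambda>n. z + 1 / 2 ^ n"])
  show "(\<lambda>n. z + 1 / 2 ^ n) \<longlonglongrightarrow> z"
    using tendsto_add[OF tendsto_const LIMSEQ_divide_realpow_zero[of 2 "1::real"]] by simp
qed (simp_all add: le_dyadic_ceiling dyadic_ceiling_le)

locale cond_cdf = prob_space M for M :: "'a measure" +
  fixes X :: "'a \<Rightarrow> 'b::euclidean_space" and Y :: "'a \<Rightarrow> real" and F :: "'b \<Rightarrow> real \<Rightarrow> real"
  assumes X_measurable [measurable]: "X \<in> borel_measurable M"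
    and Y_measurable [measurable]: "Y \<in> borel_measurable M"
    and is_cond_cdf: "is_cond_cdf M X Y F"
begin

lemma prob_space_distr_X: "prob_space (distr M borel X)"
  by (rule prob_space_distr) simp

lemma distribution_function_cond_cdf: "distribution_function (F x)"
  using is_cond_cdf by (simp add: is_cond_cdf_def distribution_function_def)

lemma cond_cdf_nonneg: "0 \<le> F x y"
  by (rule distribution_function_nonneg[OF distribution_function_cond_cdf])

lemma cond_cdf_le_one: "F x y \<le> 1"
  by (rule distribution_function_le_one[OF distribution_function_cond_cdf])

lemma prob_X_eq: "A \<in> sets borel \<Longrightarrow> prob {\<omega>\<in>space M. X \<omega> \<in> A} = measure (distr M borel X) A"
  by (simp add: measure_distr vimage_def Int_def conj_commute)

lemma prob_le_cond_cdf_const: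
  "A \<in> sets borel \<Longrightarrow> prob {\<omega>\<in>space M. X \<omega> \<in> A \<and> Y \<omega> \<le> y} = (LINT x:A|distr M borel X. F x y)"
  using is_cond_cdf by (simp add: is_cond_cdf_def)

lemma borel_measurable_cond_cdf_comp [measurable]:
  assumes [measurable]: "f \<in> borel_measurable N" "g \<in> borel_measurable N"
  shows "(\<lambda>z. F (f z) (g z)) \<in> borel_measurable N"
proof -
  have "case_prod F \<in> borel_measurable borel"
    using is_cond_cdf
    by (intro borel_measurable_distribution_function_uncurry distribution_function_cond_cdf)
      (simp add: is_cond_cdf_def)
  moreover have "(\<lambda>z. (f z, g z)) \<in> N \<rightarrow>\<^sub>M borel"
    unfolding borel_prod[symmetric] by measurable
  ultimately show ?thesis
    using measurable_compose[of "\<lambda>z. (f z, g z)" N borel "case_prod F"] by simp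
qed

lemma integrable_cond_cdf_comp:
  assumes [measurable]: "h \<in> borel_measurable borel"
  shows "integrable (distr M borel X) (\<lambda>x. F x (h x))"
proof -
  interpret mX: prob_space "distr M borel X" by (rule prob_space_distr_X)
  show ?thesis
    by (rule mX.integrable_const_bound[where B = 1]) (simp_all add: cond_cdf_nonneg cond_cdf_le_one)
qed

lemma emeasure_le_cond_cdf_const:
  assumes "B \<in> sets borel"
  shows "emeasure M {\<omega>\<in>space M. X \<omega> \<in> B \<and> Y \<omega> \<le> c} = set_nn_integral (distr M borel X) B (\<lambda>x. F x c)"
proof -
  have "emeasure M {\<omega>\<in>space M. X \<omega> \<in> B \<and> Y \<omega> \<le> c} = ennreal (LINT x:B|distr M borel X. F x c)"
    using assms by (simp add: emeasure_eq_measure prob_le_cond_cdf_const)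
  also have "\<dots> = set_nn_integral (distr M borel X) B (\<lambda>x. F x c)"
    using assms by (intro nn_set_integral_eq_set_integral[symmetric])
      (simp_all add: cond_cdf_nonneg integrable_cond_cdf_comp[of "\<lambda>_. c", simplified])
  finally show ?thesis .
qed

lemma prob_le_cond_cdf_countable:
  assumes [measurable]: "h \<in> borel_measurable borel" "A \<in> sets borel"
    and S: "countable S" "\<And>x. h x \<in> S"
  shows "prob {\<omega>\<in>space M. X \<omega> \<in> A \<and> Y \<omega> \<le> h (X \<omega>)} = (LINT x:A|distr M borel X. F x (h x))"
proof -
  let ?mX = "distr M borel X"
  define E where "E c = {\<omega>\<in>space M. X \<omega> \<in> A \<inter> h -` {c} \<and> Y \<omega> \<le> c}" for c
  have [measurable]: "h -` {c} \<in> sets borel" for c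
    using measurable_sets_borel[of h borel "{c}"] by simp
  have [measurable]: "E c \<in> sets M" for c
    unfolding E_def by measurable
  have "{\<omega>\<in>space M. X \<omega> \<in> A \<and> Y \<omega> \<le> h (X \<omega>)} = (\<Union>c\<in>S. E c)"
    unfolding E_def using S by auto
  then have "emeasure M {\<omega>\<in>space M. X \<omega> \<in> A \<and> Y \<omega> \<le> h (X \<omega>)} =
      (\<integral>\<^sup>+c. emeasure M (E c) \<partial>count_space S)"
    by (simp only:) (rule emeasure_UN_countable; auto simp: S disjoint_family_on_def E_def)
  also have "\<dots> = (\<integral>\<^sup>+c. set_nn_integral ?mX (A \<inter> h -` {c}) (\<lambda>x. F x c) \<partial>count_space S)"
    unfolding E_def by (intro nn_integral_cong emeasure_le_cond_cdf_const) simp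
  also have "\<dots> = (\<integral>\<^sup>+x. \<integral>\<^sup>+c. ennreal (F x c) * indicator (A \<inter> h -` {c}) x \<partial>count_space S \<partial>?mX)"
    by (rule nn_integral_count_space_nn_integral[symmetric, OF S(1)]) simp
  also have "\<dots> = (\<integral>\<^sup>+x\<in>A. F x (h x) \<partial>?mX)"
  proof (intro nn_integral_cong)
    fix x
    have "(\<integral>\<^sup>+c. ennreal (F x c) * indicator (A \<inter> h -` {c}) x \<partial>count_space S)
        = (\<Sum>c\<in>{h x}. ennreal (F x c) * indicator (A \<inter> h -` {c}) x)"
      by (rule nn_integral_count_space') (auto simp: S indicator_def)
    then show "(\<integral>\<^sup>+c. ennreal (F x c) * indicator (A \<inter> h -` {c}) x \<partial>count_space S) =
        ennreal (F x (h x)) * indicator A x"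
      by (simp add: indicator_def)
  qed
  also have "\<dots> = ennreal (LINT x:A|?mX. F x (h x))"
    by (intro nn_set_integral_eq_set_integral integrable_cond_cdf_comp) (auto simp: cond_cdf_nonneg)
  finally have "emeasure M {\<omega>\<in>space M. X \<omega> \<in> A \<and> Y \<omega> \<le> h (X \<omega>)} =
      ennreal (LINT x:A|?mX. F x (h x))" .
  moreover have "0 \<le> (LINT x:A|?mX. F x (h x))"
    unfolding set_lebesgue_integral_def
    by (intro integral_nonneg_AE) (simp add: cond_cdf_nonneg)
  ultimately show ?thesis
    by (simp add: emeasure_eq_measure)
qed

text \<open>Approximate h from above by the countably-valued dyadic ceilings and pass to the limit
  on both sides, using right continuity of F.\<close>
lemma prob_le_cond_cdf:
  assumes [measurable]: "h \<in> borel_measurable borel" "A \<in> sets borel"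
  shows "prob {\<omega>\<in>space M. X \<omega> \<in> A \<and> Y \<omega> \<le> h (X \<omega>)} = (LINT x:A|distr M borel X. F x (h x))"
proof -
  define E where "E n = {\<omega>\<in>space M. X \<omega> \<in> A \<and> Y \<omega> \<le> dyadic_ceiling n (h (X \<omega>))}" for n
  have E_sets [measurable]: "E n \<in> sets M" for n
    unfolding E_def by measurable
  have "decseq E"
    unfolding E_def using dyadic_ceiling_Suc_le order_trans
    by (intro decseq_SucI) blast
  then have lim_prob: "(\<lambda>n. prob (E n)) \<longlonglongrightarrow> prob (\<Inter>n. E n)"
    by (intro finite_Lim_measure_decseq) (auto simp: E_sets)
  have Inter_E: "(\<Inter>n. E n) = {\<omega>\<in>space M. X \<omega> \<in> A \<and> Y \<omega> \<le> h (X \<omega>)}"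
    unfolding E_def
    by (auto intro: LIMSEQ_le_const[OF dyadic_ceiling_tendsto] order_trans[OF _ le_dyadic_ceiling])
  have prob_E: "prob (E n) = (LINT x:A|distr M borel X. F x (dyadic_ceiling n (h x)))" for n
    unfolding E_def
    by (rule prob_le_cond_cdf_countable[where S = "range (\<lambda>k::int. real_of_int k / 2 ^ n)"])
      (simp_all add: dyadic_ceiling_in_range)
  have "(\<lambda>n. LINT x:A|distr M borel X. F x (dyadic_ceiling n (h x)))
      \<longlonglongrightarrow> (LINT x:A|distr M borel X. F x (h x))"
    unfolding set_lebesgue_integral_def
  proof (rule integral_dominated_convergence[where w = "\<lambda>_. 1"])
    show "AE x in distr M borel X. (\<lambda>n. indicat_real A x *\<^sub>R F x (dyadic_ceiling n (h x)))
        \<longlonglongrightarrow> indicat_real A x *\<^sub>R F x (h x)"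
      by (intro AE_I2 tendsto_scaleR[OF tendsto_const] distribution_function_tendsto_from_above
          [OF distribution_function_cond_cdf le_dyadic_ceiling dyadic_ceiling_tendsto])
    show "AE x in distr M borel X. norm (indicat_real A x *\<^sub>R F x (dyadic_ceiling n (h x))) \<le> 1" for n
      by (intro AE_I2) (simp add: indicator_def cond_cdf_nonneg cond_cdf_le_one)
    show "integrable (distr M borel X) (\<lambda>_. 1)"
      using prob_space_distr_X by (simp add: prob_space.finite_measure finite_measure.integrable_const)
  qed simp_all
  then show ?thesis
    using LIMSEQ_unique[OF lim_prob] by (simp add: Inter_E prob_E)
qed

lemma AE_cond_cdf_eq_const_iff:
  assumes [measurable]: "h \<in> borel_measurable borel"
  shows "(AE x in distr M borel X. F x (h x) = s) \<longleftrightarrow>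
    (\<forall>A\<in>sets borel. prob {\<omega>\<in>space M. X \<omega> \<in> A \<and> Y \<omega> \<le> h (X \<omega>)} = s * prob {\<omega>\<in>space M. X \<omega> \<in> A})"
proof -
  have "prob {\<omega>\<in>space M. X \<omega> \<in> A \<and> Y \<omega> \<le> h (X \<omega>)} = s * prob {\<omega>\<in>space M. X \<omega> \<in> A} \<longleftrightarrow>
      (LINT x:A|distr M borel X. F x (h x)) = (LINT x:A|distr M borel X. s)"
    if [measurable]: "A \<in> sets borel" for A
  proof -
    have "(LINT x:A|distr M borel X. s) = s * measure (distr M borel X) A"
      using prob_space.finite_measure[OF prob_space_distr_X]
      by (simp add: set_integral_const finite_measure.emeasure_finite)
    then show ?thesis
      by (simp add: prob_le_cond_cdf prob_X_eq)
  qed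
  moreover have "(AE x in distr M borel X. F x (h x) = s) \<longleftrightarrow>
      (\<forall>A\<in>sets borel. (LINT x:A|distr M borel X. F x (h x)) = (LINT x:A|distr M borel X. s))"
  proof
    assume "AE x in distr M borel X. F x (h x) = s"
    then show "\<forall>A\<in>sets borel. (LINT x:A|distr M borel X. F x (h x)) = (LINT x:A|distr M borel X. s)"
      by (auto intro!: set_lebesgue_integral_cong_AE elim: AE_mp)
  next
    assume "\<forall>A\<in>sets borel. (LINT x:A|distr M borel X. F x (h x)) = (LINT x:A|distr M borel X. s)"
    then show "AE x in distr M borel X. F x (h x) = s"
      using prob_space.finite_measure[OF prob_space_distr_X]
      by (intro density_unique_real integrable_cond_cdf_comp) (simp_all add: finite_measure.integrable_const)
  qed
  ultimately show ?thesis by simp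
qed

end

section \<open>Representation by a uniform variable independent of X\<close>

lemma emeasure_distr_restrict_space:
  assumes "E \<in> sets M" "U \<in> borel_measurable M" "C \<in> sets borel"
  shows "emeasure (distr (restrict_space M E) borel U) C = emeasure M {\<omega>\<in>E. U \<omega> \<in> C}"
proof -
  have "U \<in> restrict_space M E \<rightarrow>\<^sub>M borel"
    using assms(2) by (rule measurable_restrict_space1)
  then have "emeasure (distr (restrict_space M E) borel U) C = emeasure (restrict_space M E) (U -` C \<inter> E)"
    using assms sets.sets_into_space[OF assms(1)]
    by (simp add: emeasure_distr space_restrict_space Int_absorb2)
  also have "\<dots> = emeasure M {\<omega>\<in>E. U \<omega> \<in> C}"
    using assms by (subst emeasure_restrict_space) (auto intro!: arg_cong[where f = "emeasure M"])
  finally show ?thesis .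
qed

lemma measure_uniform_01_atMost:
  "measure (uniform_measure lborel {0..1::real}) {..s} = max 0 (min s 1)"
proof -
  have "{0..1} \<inter> {..s} = {0..min s 1}" by auto
  then show ?thesis by (simp add: min.commute)
qed

context prob_space
begin

lemma prob_le_conj_of_uniform_indep:
  assumes [measurable]: "U \<in> borel_measurable M" "A \<in> sets borel"
    and U: "distr M borel U = uniform_measure lborel {0..1}" "indep_rv M U X"
    and s: "s \<in> {0..1}"
  shows "prob {\<omega>\<in>space M. U \<omega> \<le> s \<and> X \<omega> \<in> A} = s * prob {\<omega>\<in>space M. X \<omega> \<in> A}"
proof -
  have "prob {\<omega>\<in>space M. U \<omega> \<le> s} = measure (distr M borel U) {..s}"
    by (simp add: measure_distr vimage_def Int_def conj_commute)
  also have "\<dots> = s"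
    using s by (simp add: U(1) measure_uniform_01_atMost)
  finally show ?thesis
    using U(2)[unfolded indep_rv_def, rule_format, of "{..s}" A] by simp
qed

lemma AE_mem_01_of_uniform:
  fixes U :: "'a \<Rightarrow> real"
  assumes [measurable]: "U \<in> borel_measurable M" and U: "distr M borel U = uniform_measure lborel {0..1}"
  shows "AE \<omega> in M. U \<omega> \<in> {0..1}"
proof -
  have "prob {\<omega>\<in>space M. U \<omega> \<in> {0..1}} = measure (distr M borel U) {0..1}"
    by (simp add: measure_distr vimage_def Int_def conj_commute)
  then have "AE \<omega> in M. \<omega> \<in> {\<omega>\<in>space M. U \<omega> \<in> {0..1}}"
    by (intro AE_prob_1) (simp add: U)
  then show ?thesis
    by eventually_elim simp
qed

lemma prob_le_conj_eq_clamp: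
  assumes U01: "\<And>\<omega>. \<omega> \<in> space M \<Longrightarrow> U \<omega> \<in> {0..1}"
    and le: "\<And>s. s \<in> {0..1} \<Longrightarrow>
      prob {\<omega>\<in>space M. U \<omega> \<le> s \<and> X \<omega> \<in> A} = s * prob {\<omega>\<in>space M. X \<omega> \<in> A}"
  shows "prob {\<omega>\<in>space M. U \<omega> \<le> s \<and> X \<omega> \<in> A} = max 0 (min s 1) * prob {\<omega>\<in>space M. X \<omega> \<in> A}"
proof -
  consider "s < 0" | "0 \<le> s" "s \<le> 1" | "1 < s" by linarith
  then show ?thesis
  proof cases
    case 1
    then have empty: "{\<omega>\<in>space M. U \<omega> \<le> s \<and> X \<omega> \<in> A} = {}"
      by (auto dest!: U01)
    from 1 show ?thesis by (simp only: empty) simp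
  next
    case 2
    then show ?thesis by (simp add: le)
  next
    case 3
    then have "{\<omega>\<in>space M. U \<omega> \<le> s \<and> X \<omega> \<in> A} = {\<omega>\<in>space M. X \<omega> \<in> A}"
      by (auto dest: U01)
    with 3 show ?thesis by simp
  qed
qed

text \<open>For fixed A both sides are finite measures in B, and they have the same cdf.\<close>
lemma prob_conj_eq_uniform_of_prob_le_conj:
  assumes [measurable]: "U \<in> borel_measurable M" "X \<in> borel_measurable M" "A \<in> sets borel" "B \<in> sets borel"
    and U01: "\<And>\<omega>. \<omega> \<in> space M \<Longrightarrow> U \<omega> \<in> {0..1}"
    and le: "\<And>s. s \<in> {0..1} \<Longrightarrow>
      prob {\<omega>\<in>space M. U \<omega> \<le> s \<and> X \<omega> \<in> A} = s * prob {\<omega>\<in>space M. X \<omega> \<in> A}"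
  shows "prob {\<omega>\<in>space M. U \<omega> \<in> B \<and> X \<omega> \<in> A} =
    measure (uniform_measure lborel {0..1}) B * prob {\<omega>\<in>space M. X \<omega> \<in> A}"
proof -
  define EA where "EA = {\<omega>\<in>space M. X \<omega> \<in> A}"
  have EA [measurable]: "EA \<in> sets M" unfolding EA_def by measurable
  define N1 where "N1 = distr (restrict_space M EA) borel U"
  define N2 where "N2 = scale_measure (prob EA) (uniform_measure lborel {0..1::real})"
  have N1_eq: "emeasure N1 C = emeasure M {\<omega>\<in>space M. U \<omega> \<in> C \<and> X \<omega> \<in> A}"
    if [measurable]: "C \<in> sets borel" for C
    unfolding N1_def
    by (subst emeasure_distr_restrict_space) (auto simp: EA_def intro!: arg_cong[where f = "emeasure M"])
  have unif: "prob_space (uniform_measure lborel {0..1::real})"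
    by (rule prob_space_uniform_measure) auto
  have "N1 = N2"
  proof (rule cdf_unique')
    show "finite_borel_measure N1"
      unfolding N1_def finite_borel_measure_def finite_borel_measure_axioms_def
      by (simp add: finite_measure.finite_measure_distr finite_measure_restrict_space
          finite_measure_axioms measurable_restrict_space1)
    show "finite_borel_measure N2"
      unfolding N2_def finite_borel_measure_def finite_borel_measure_axioms_def
      using unif by (auto intro!: finite_measureI simp: prob_space.emeasure_space_1 space_scale_measure)
    have "cdf N1 s = cdf N2 s" for s
    proof -
      have "cdf N1 s = prob {\<omega>\<in>space M. U \<omega> \<le> s \<and> X \<omega> \<in> A}"
        by (simp add: cdf_def measure_def N1_eq)
      also have "\<dots> = max 0 (min s 1) * prob EA"
        unfolding EA_def by (rule prob_le_conj_eq_clamp[OF U01 le])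
      also have "\<dots> = cdf N2 s"
        by (simp add: cdf_def N2_def measure_uniform_01_atMost mult.commute)
      finally show ?thesis .
    qed
    then show "cdf N1 = cdf N2" ..
  qed
  have "prob {\<omega>\<in>space M. U \<omega> \<in> B \<and> X \<omega> \<in> A} = measure N1 B"
    by (simp add: measure_def N1_eq)
  also have "\<dots> = measure N2 B"
    using \<open>N1 = N2\<close> by simp
  also have "\<dots> = measure (uniform_measure lborel {0..1}) B * prob {\<omega>\<in>space M. X \<omega> \<in> A}"
    by (simp add: N2_def EA_def mult.commute)
  finally show ?thesis .
qed

lemma uniform_indep_of_prob_le_conj:
  assumes [measurable]: "U \<in> borel_measurable M" "X \<in> borel_measurable M"
    and U01: "\<And>\<omega>. \<omega> \<in> space M \<Longrightarrow> U \<omega> \<in> {0..1}"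
    and le: "\<And>A s. A \<in> sets borel \<Longrightarrow> s \<in> {0..1} \<Longrightarrow>
      prob {\<omega>\<in>space M. U \<omega> \<le> s \<and> X \<omega> \<in> A} = s * prob {\<omega>\<in>space M. X \<omega> \<in> A}"
  shows "distr M borel U = uniform_measure lborel {0..1} \<and> indep_rv M U X"
proof
  have joint: "prob {\<omega>\<in>space M. U \<omega> \<in> B \<and> X \<omega> \<in> A} =
      measure (uniform_measure lborel {0..1}) B * prob {\<omega>\<in>space M. X \<omega> \<in> A}"
    if "A \<in> sets borel" "B \<in> sets borel" for A B
    using that by (intro prob_conj_eq_uniform_of_prob_le_conj U01 le) simp_all
  then have prob_U: "prob {\<omega>\<in>space M. U \<omega> \<in> B} = measure (uniform_measure lborel {0..1}) B"
    if "B \<in> sets borel" for B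
    using that joint[of UNIV B] by (simp add: prob_space)
  interpret unif: prob_space "uniform_measure lborel {0..1::real}"
    by (rule prob_space_uniform_measure) auto
  show "distr M borel U = uniform_measure lborel {0..1}"
  proof (rule measure_eqI)
    fix B assume "B \<in> sets (distr M borel U)"
    then have [measurable]: "B \<in> sets borel" by simp
    have "emeasure (distr M borel U) B = prob {\<omega>\<in>space M. U \<omega> \<in> B}"
      by (simp add: emeasure_distr emeasure_eq_measure vimage_def Int_def conj_commute)
    also have "\<dots> = emeasure (uniform_measure lborel {0..1}) B"
      by (simp add: prob_U unif.emeasure_eq_measure)
    finally show "emeasure (distr M borel U) B = emeasure (uniform_measure lborel {0..1}) B" .
  qed simp
  show "indep_rv M U X"
    unfolding indep_rv_def by (simp add: joint prob_U)
qed

lemma prob_le_conj_eq_of_representation: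
  fixes g :: "'b::topological_space \<Rightarrow> real \<Rightarrow> real"
  assumes [measurable]: "U \<in> borel_measurable M" "X \<in> borel_measurable M" "Y \<in> borel_measurable M"
    "(\<lambda>x. g x s) \<in> borel_measurable borel" "A \<in> sets borel"
    and Y: "AE \<omega> in M. Y \<omega> = g (X \<omega>) (U \<omega>)" and U01: "AE \<omega> in M. U \<omega> \<in> {0..1}"
    and g: "AE \<omega> in M. strict_mono_on {0..1} (g (X \<omega>))" and s: "s \<in> {0..1}"
  shows "prob {\<omega>\<in>space M. U \<omega> \<le> s \<and> X \<omega> \<in> A} = prob {\<omega>\<in>space M. X \<omega> \<in> A \<and> Y \<omega> \<le> g (X \<omega>) s}"
proof (rule measure_eq_AE)
  show "AE \<omega> in M. \<omega> \<in> {\<omega>\<in>space M. U \<omega> \<le> s \<and> X \<omega> \<in> A} \<longleftrightarrow>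
      \<omega> \<in> {\<omega>\<in>space M. X \<omega> \<in> A \<and> Y \<omega> \<le> g (X \<omega>) s}"
    using Y U01 g
  proof eventually_elim
    case (elim \<omega>)
    then have "g (X \<omega>) (U \<omega>) \<le> g (X \<omega>) s \<longleftrightarrow> U \<omega> \<le> s"
      using s by (intro strict_mono_on_less_eq) auto
    with elim(1) show ?case by auto
  qed
qed measurable

end

context cond_cdf
begin

context
  fixes g :: "'b \<Rightarrow> real \<Rightarrow> real"
  assumes g_measurable [measurable]: "\<And>s. (\<lambda>x. g x s) \<in> borel_measurable borel"
    and Q: "AE x in distr M borel X. continuous_on {0..1} (cond_quantile F x) \<and>
      strict_mono_on {0..1} (cond_quantile F x) \<and> (\<forall>t\<in>{0..1}. cond_quantile F x t = g x t)"
begin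

lemma prob_le_cond_quantile_level:
  assumes [measurable]: "A \<in> sets borel" and s: "s \<in> {0..1}"
  shows "prob {\<omega>\<in>space M. X \<omega> \<in> A \<and> Y \<omega> \<le> g (X \<omega>) s} = s * prob {\<omega>\<in>space M. X \<omega> \<in> A}"
proof -
  have "AE x in distr M borel X. F x (g x s) = s"
    using Q by eventually_elim (metis s cdf_cond_quantile distribution_function_cond_cdf)
  then show ?thesis
    using AE_cond_cdf_eq_const_iff[of "\<lambda>x. g x s" s] by simp
qed

lemma AE_eq_cond_quantile_cdf: "AE \<omega> in M. Y \<omega> = g (X \<omega>) (F (X \<omega>) (Y \<omega>))"
proof -
  have "AE \<omega> in M. \<omega> \<notin> {\<omega>\<in>space M. Y \<omega> \<le> g (X \<omega>) 0}"
    using prob_le_cond_quantile_level[of UNIV 0] by (subst prob_eq_0[symmetric]) simp_all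
  moreover have "AE \<omega> in M. \<omega> \<in> {\<omega>\<in>space M. Y \<omega> \<le> g (X \<omega>) 1}"
    using prob_le_cond_quantile_level[of UNIV 1] by (intro AE_prob_1) (simp add: prob_space)
  ultimately show ?thesis
    using AE_distrD[OF X_measurable Q]
  proof eventually_elim
    case (elim \<omega>)
    then have "cond_quantile F (X \<omega>) (F (X \<omega>) (Y \<omega>)) = Y \<omega>"
      by (intro cond_quantile_cdf distribution_function_cond_cdf) auto
    with elim(3) show ?case
      by (simp add: cond_cdf_nonneg cond_cdf_le_one)
  qed
qed

lemma cond_quantile_representation:
  "\<exists>U. U \<in> borel_measurable M \<and> (AE \<omega> in M. Y \<omega> = g (X \<omega>) (U \<omega>)) \<and>
    distr M borel U = uniform_measure lborel {0..1} \<and> indep_rv M U X"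
proof (intro exI conjI)
  let ?U = "\<lambda>\<omega>. F (X \<omega>) (Y \<omega>)"
  show "?U \<in> borel_measurable M" by measurable
  show Y: "AE \<omega> in M. Y \<omega> = g (X \<omega>) (?U \<omega>)"
    by (rule AE_eq_cond_quantile_cdf)
  have g_mono: "AE \<omega> in M. strict_mono_on {0..1} (g (X \<omega>))"
    using AE_distrD[OF X_measurable Q]
    by eventually_elim (metis (no_types, lifting) strict_mono_on_def)
  have "distr M borel ?U = uniform_measure lborel {0..1} \<and> indep_rv M ?U X"
  proof (rule uniform_indep_of_prob_le_conj)
    fix A :: "'b set" and s :: real assume [measurable]: "A \<in> sets borel" and s: "s \<in> {0..1}"
    have "prob {\<omega>\<in>space M. ?U \<omega> \<le> s \<and> X \<omega> \<in> A} =
        prob {\<omega>\<in>space M. X \<omega> \<in> A \<and> Y \<omega> \<le> g (X \<omega>) s}"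
      using g_mono s by (intro prob_le_conj_eq_of_representation Y) (simp_all add: cond_cdf_nonneg cond_cdf_le_one)
    then show "prob {\<omega>\<in>space M. ?U \<omega> \<le> s \<and> X \<omega> \<in> A} = s * prob {\<omega>\<in>space M. X \<omega> \<in> A}"
      using prob_le_cond_quantile_level s by simp
  qed (simp_all add: cond_cdf_nonneg cond_cdf_le_one)
  then show "distr M borel ?U = uniform_measure lborel {0..1}" "indep_rv M ?U X"
    by simp_all
qed

end

text \<open>Each level set of the representation gives F x (g x s) = s almost surely; a countable
  (rational) family of levels suffices by monotonicity.\<close>
lemma cond_quantile_eq_of_representation:
  assumes [measurable]: "\<And>s. (\<lambda>x. g x s) \<in> borel_measurable borel"
    and g: "AE x in distr M borel X. continuous_on {0..1} (g x) \<and> strict_mono_on {0..1} (g x)"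
    and U_measurable [measurable]: "U \<in> borel_measurable M"
    and Y: "AE \<omega> in M. Y \<omega> = g (X \<omega>) (U \<omega>)"
    and U: "distr M borel U = uniform_measure lborel {0..1}" "indep_rv M U X"
  shows "AE x in distr M borel X. \<forall>t\<in>{0..1}. cond_quantile F x t = g x t"
proof -
  have U01: "AE \<omega> in M. U \<omega> \<in> {0..1}"
    by (rule AE_mem_01_of_uniform[OF U_measurable U(1)])
  have g_mono: "AE \<omega> in M. strict_mono_on {0..1} (g (X \<omega>))"
    using AE_distrD[OF X_measurable g] by simp
  have "AE x in distr M borel X. F x (g x s) = s" if s: "s \<in> {0..1}" for s
    unfolding AE_cond_cdf_eq_const_iff[OF \<open>(\<lambda>x. g x s) \<in> borel_measurable borel\<close>]
  proof
    fix A :: "'b set" assume [measurable]: "A \<in> sets borel"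
    have "prob {\<omega>\<in>space M. X \<omega> \<in> A \<and> Y \<omega> \<le> g (X \<omega>) s} = prob {\<omega>\<in>space M. U \<omega> \<le> s \<and> X \<omega> \<in> A}"
      by (intro prob_le_conj_eq_of_representation[symmetric] Y U01 g_mono s) simp_all
    also have "\<dots> = s * prob {\<omega>\<in>space M. X \<omega> \<in> A}"
      by (intro prob_le_conj_of_uniform_indep U s) simp_all
    finally show "prob {\<omega>\<in>space M. X \<omega> \<in> A \<and> Y \<omega> \<le> g (X \<omega>) s} = s * prob {\<omega>\<in>space M. X \<omega> \<in> A}" .
  qed
  then have "AE x in distr M borel X. \<forall>s\<in>\<rat> \<inter> {0..1}. F x (g x s) = s"
    by (intro AE_ball_countable' countable_Int1 countable_rat) auto
  with g show ?thesis
    by eventually_elim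
      (auto intro: cond_quantile_eq_of_rational_levels[OF distribution_function_cond_cdf])
qed

end

theorem mainTheorem6:
  fixes M :: "'a measure"
    and X :: "'a \<Rightarrow> real ^ 'n"
    and Y :: "'a \<Rightarrow> real"
    and F :: "real ^ 'n \<Rightarrow> real \<Rightarrow> real"
    and \<alpha> :: "real \<Rightarrow> real"
    and \<beta> :: "real \<Rightarrow> real ^ 'n"
  assumes "prob_space M"
    and "nonatomic M"
    and "X \<in> borel_measurable M"
    and "bounded (X ` space M)"
    and "integral\<^sup>L M X = 0"
    and "Y \<in> borel_measurable M"
    and "bounded (Y ` space M)"
    and "is_cond_cdf M X Y F"
    and "AE x in distr M borel X.
           continuous_on {0..1} (cond_quantile F x) \<and> strict_mono_on {0..1} (cond_quantile F x)"
    and "\<And>a b. measure M {\<omega>\<in>space M. Y \<omega> = a + b \<bullet> X \<omega>} = 0"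
    and "continuous_on {0..1} \<alpha>"
    and "continuous_on {0..1} \<beta>"
    and "AE x in distr M borel X. strict_mono_on {0..1} (\<lambda>t. \<alpha> t + \<beta> t \<bullet> x)"
  shows "(AE x in distr M borel X. \<forall>t\<in>{0..1}. cond_quantile F x t = \<alpha> t + x \<bullet> \<beta> t)
     \<longleftrightarrow> (\<exists>U. U \<in> borel_measurable M \<and>
              (AE \<omega> in M. Y \<omega> = \<alpha> (U \<omega>) + X \<omega> \<bullet> \<beta> (U \<omega>)) \<and>
              distr M borel U = uniform_measure lborel {0..1} \<and>
              indep_rv M U X)"
proof -
  interpret cond_cdf M X Y F
    using assms(1,3,6,8) by (simp add: cond_cdf_def cond_cdf_axioms_def)
  define g where "g x t = \<alpha> t + x \<bullet> \<beta> t" for x t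
  have g_measurable: "(\<lambda>x. g x s) \<in> borel_measurable borel" for s
    unfolding g_def by measurable
  have g_cont: "continuous_on {0..1} (g x)" for x
    unfolding g_def by (intro continuous_intros assms(11,12))
  have g_mono: "AE x in distr M borel X. continuous_on {0..1} (g x) \<and> strict_mono_on {0..1} (g x)"
    using assms(13) by eventually_elim (simp add: g_cont, simp add: g_def[abs_def] inner_commute)
  show ?thesis
    unfolding g_def[symmetric]
  proof (intro iffI cond_quantile_representation[where g = g, OF g_measurable])
    assume "AE x in distr M borel X. \<forall>t\<in>{0..1}. cond_quantile F x t = g x t"
    with assms(9) show "AE x in distr M borel X. continuous_on {0..1} (cond_quantile F x) \<and>
        strict_mono_on {0..1} (cond_quantile F x) \<and> (\<forall>t\<in>{0..1}. cond_quantile F x t = g x t)"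
      by eventually_elim simp
  qed (elim exE conjE, rule cond_quantile_eq_of_representation[where g = g, OF g_measurable g_mono])
qed

end
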